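(* Let $(V,m)$ be a discrete measure space and $L$ a locally finite selfadjoint operator on $\ell^2(V,m)$ with kernel $l$. Then for $\varphi\in C(V)$ and $\lambda\in\mathbb{R}$ the following are equivalent: (i) $\varphi$ is a generalized eigenfunction of $L$ to the eigenvalue $\lambda$; (ii) $\varphi$ is a $C_c(V)$-eigenfunction of $L$ to the eigenvalue $\lambda$, where $\varphi$ is regarded as the linear functional $u\mapsto(\varphi,u)_m$ on $C_c(V)$.
   Context: A discrete measure space $(V,m)$ is a finite or countable set $V$ with $m:V\to(0,\infty)$; $C(V)$ is the set of all functions $V\to\mathbb{C}$, $C_c(V)$ those of finite support; $\ell^2(V,m)$ has inner product $\langle v,u\rangle=\sum_x\overline{v(x)}u(x)m(x)$. An operator $L$ on $\ell^2(V,m)$ is locally finite if $C_c(V)\subset D(L)$ and there is $l:V\times V\to\mathbb{C}$ with $\{y:l(x,y)\ne0\}$ finite for each $x$ such that $L$ is a restriction of $\tilde L$, $(\tilde Lw)(x)=\sum_y l(x,y)w(y)m(y)$, $w\in C(V)$. $\varphi\in C(V)$ is a generalized eigenfunction to $\lambda$ if $(\tilde L-\lambda)\varphi\equiv0$. The pairing is $(g,u)_m=\sum_x\overline{g(x)}u(x)m(x)$ for $g\in C(V)$, $u\in C_c(V)$. A linear functional $\varphi$ on $C_c(V)$ is a $C_c(V)$-eigenfunction of $L$ to $\lambda$ if $(\varphi,Lu)=\lambda(\varphi,u)$ for all $u\in C_c(V)\cap D(L)$ with $Lu\in C_c(V)$. *)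

theory Defs
  imports "HOL-Analysis.Analysis"
begin

text \<open>Discrete measure space: the vertex set is the (finite or countable) type 'v,
  the measure is m :: 'v => real with m x > 0. Functions V -> C are 'v => complex.\<close>

definition disc_measure :: "('v::countable \<Rightarrow> real) \<Rightarrow> bool" where
  "disc_measure m \<longleftrightarrow> (\<forall>x. m x > 0)"

definition Cc :: "('v \<Rightarrow> complex) set" where
  "Cc = {u. finite {x. u x \<noteq> 0}}"

definition l2 :: "('v \<Rightarrow> real) \<Rightarrow> ('v \<Rightarrow> complex) set" where
  "l2 m = {u. (\<lambda>x. (cmod (u x))\<^sup>2 * m x) summable_on UNIV}"

definition ip :: "('v \<Rightarrow> real) \<Rightarrow> ('v \<Rightarrow> complex) \<Rightarrow> ('v \<Rightarrow> complex) \<Rightarrow> complex" where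
  "ip m v u = (\<Sum>\<^sub>\<infinity>x. cnj (v x) * u x * complex_of_real (m x))"

definition pair :: "('v \<Rightarrow> real) \<Rightarrow> ('v \<Rightarrow> complex) \<Rightarrow> ('v \<Rightarrow> complex) \<Rightarrow> complex" where
  "pair m g u = (\<Sum>x\<in>{x. u x \<noteq> 0}. cnj (g x) * u x * complex_of_real (m x))"

definition is_operator :: "('v \<Rightarrow> real) \<Rightarrow> ('v \<Rightarrow> complex) set \<Rightarrow> (('v \<Rightarrow> complex) \<Rightarrow> ('v \<Rightarrow> complex)) \<Rightarrow> bool" where
  "is_operator m D L \<longleftrightarrow> D \<subseteq> l2 m \<and> (\<forall>u\<in>D. L u \<in> l2 m) \<and>
     (\<forall>u\<in>D. \<forall>v\<in>D. \<forall>a b::complex. (\<lambda>x. a * u x + b * v x) \<in> D \<and>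
        L (\<lambda>x. a * u x + b * v x) = (\<lambda>x. a * L u x + b * L v x))"

text \<open>Selfadjointness L = L*: the domain of the adjoint
  D(L*) = {v in l2. exists w in l2. for all u in D. <v, Lu> = <w, u>} equals D,
  and L* v = L v for v in D, i.e. <v, Lu> = <Lv, u> for all u, v in D.\<close>
definition selfadjoint :: "('v \<Rightarrow> real) \<Rightarrow> ('v \<Rightarrow> complex) set \<Rightarrow> (('v \<Rightarrow> complex) \<Rightarrow> ('v \<Rightarrow> complex)) \<Rightarrow> bool" where
  "selfadjoint m D L \<longleftrightarrow> is_operator m D L \<and>
     (\<forall>v\<in>l2 m. v \<in> D \<longleftrightarrow> (\<exists>w\<in>l2 m. \<forall>u\<in>D. ip m v (L u) = ip m w u)) \<and>
     (\<forall>u\<in>D. \<forall>v\<in>D. ip m v (L u) = ip m (L v) u)"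

definition Ltilde :: "('v \<Rightarrow> 'v \<Rightarrow> complex) \<Rightarrow> ('v \<Rightarrow> real) \<Rightarrow> ('v \<Rightarrow> complex) \<Rightarrow> ('v \<Rightarrow> complex)" where
  "Ltilde l m w = (\<lambda>x. \<Sum>y\<in>{y. l x y \<noteq> 0}. l x y * w y * complex_of_real (m y))"

definition locally_finite :: "('v \<Rightarrow> real) \<Rightarrow> ('v \<Rightarrow> complex) set \<Rightarrow> (('v \<Rightarrow> complex) \<Rightarrow> ('v \<Rightarrow> complex)) \<Rightarrow> ('v \<Rightarrow> 'v \<Rightarrow> complex) \<Rightarrow> bool" where
  "locally_finite m D L l \<longleftrightarrow> Cc \<subseteq> D \<and> (\<forall>x. finite {y. l x y \<noteq> 0}) \<and> (\<forall>u\<in>D. L u = Ltilde l m u)"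

definition gen_eigenfunction :: "('v \<Rightarrow> 'v \<Rightarrow> complex) \<Rightarrow> ('v \<Rightarrow> real) \<Rightarrow> ('v \<Rightarrow> complex) \<Rightarrow> complex \<Rightarrow> bool" where
  "gen_eigenfunction l m \<phi> lam \<longleftrightarrow> (\<forall>x. Ltilde l m \<phi> x - lam * \<phi> x = 0)"

text \<open>phi, regarded as the functional u |-> (phi,u)_m on C_c(V), is a C_c(V)-eigenfunction.\<close>
definition Cc_eigenfunction :: "('v \<Rightarrow> real) \<Rightarrow> ('v \<Rightarrow> complex) set \<Rightarrow> (('v \<Rightarrow> complex) \<Rightarrow> ('v \<Rightarrow> complex)) \<Rightarrow> ('v \<Rightarrow> complex) \<Rightarrow> complex \<Rightarrow> bool" where
  "Cc_eigenfunction m D L \<phi> lam \<longleftrightarrow>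
     (\<forall>u. u \<in> Cc \<and> u \<in> D \<and> L u \<in> Cc \<longrightarrow> pair m \<phi> (L u) = lam * pair m \<phi> u)"

end

theory Submission
  imports Defs
begin

text \<open>Selfadjointness, tested on the point masses, forces the kernel to be Hermitian,
  l y x = conj (l x y). For a Hermitian kernel with finite rows, the formal operator is
  formally symmetric against finitely supported functions: (phi, Ltilde u) = (Ltilde phi, u)
  for every phi in C(V) and u in C_c(V), the sums being finite. Hence (phi, L u) = lam (phi, u)
  for all u in C_c(V) says exactly that Ltilde phi - lam phi is orthogonal to C_c(V) (lam is real),
  and testing with point masses shows that this means Ltilde phi = lam phi.\<close>

definition delta :: "'v \<Rightarrow> 'v \<Rightarrow> complex" where
  "delta x = (\<lambda>z. if z = x then 1 else 0)"

lemma delta_in_Cc: "delta x \<in> Cc"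
proof -
  have "{z. delta x z \<noteq> 0} = {x}" by (auto simp: delta_def)
  then show ?thesis by (simp add: Cc_def)
qed

lemma pair_delta: "pair m g (delta x) = cnj (g x) * complex_of_real (m x)"
proof -
  have "{z. delta x z \<noteq> 0} = {x}" by (auto simp: delta_def)
  then show ?thesis by (simp add: pair_def delta_def)
qed

lemma disc_measure_nonzero: "disc_measure m \<Longrightarrow> m x \<noteq> 0"
  unfolding disc_measure_def by (metis less_irrefl)

lemma pair_scale_left: "pair m (\<lambda>x. c * g x) u = cnj c * pair m g u"
  unfolding pair_def by (simp add: sum_distrib_left ac_simps)

lemma infsum_singleton_support:
  fixes f :: "'a \<Rightarrow> complex"
  assumes "\<And>z. z \<noteq> x \<Longrightarrow> f z = 0"
  shows "infsum f UNIV = f x"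
proof -
  have "infsum f UNIV = infsum f {x}"
    by (rule infsum_cong_neutral) (use assms in auto)
  then show ?thesis by simp
qed

lemma ip_delta_left: "ip m (delta x) w = w x * complex_of_real (m x)"
  unfolding ip_def by (subst infsum_singleton_support[where x = x]) (auto simp: delta_def)

lemma ip_delta_right: "ip m v (delta x) = cnj (v x) * complex_of_real (m x)"
  unfolding ip_def by (subst infsum_singleton_support[where x = x]) (auto simp: delta_def)

lemma Ltilde_eq_sum_superset:
  assumes "finite {y. l x y \<noteq> 0}" and "finite A"
    and "\<And>y. l x y \<noteq> 0 \<Longrightarrow> w y \<noteq> 0 \<Longrightarrow> y \<in> A"
  shows "Ltilde l m w x = (\<Sum>y\<in>A. l x y * w y * complex_of_real (m y))"
proof -
  have "Ltilde l m w x = (\<Sum>y\<in>{y. l x y \<noteq> 0} \<union> A. l x y * w y * complex_of_real (m y))"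
    unfolding Ltilde_def by (rule sum.mono_neutral_left) (use assms in auto)
  also have "\<dots> = (\<Sum>y\<in>A. l x y * w y * complex_of_real (m y))"
    by (rule sum.mono_neutral_right) (use assms in auto)
  finally show ?thesis .
qed

lemma pair_eq_sum_superset:
  assumes "finite A" and "{x. u x \<noteq> 0} \<subseteq> A"
  shows "pair m g u = (\<Sum>x\<in>A. cnj (g x) * u x * complex_of_real (m x))"
  unfolding pair_def by (rule sum.mono_neutral_left) (use assms in auto)

lemma Ltilde_delta:
  assumes "finite {w. l y w \<noteq> 0}"
  shows "Ltilde l m (delta x) y = l y x * complex_of_real (m x)"
proof -
  have "Ltilde l m (delta x) y = (\<Sum>z\<in>{x}. l y z * delta x z * complex_of_real (m z))"
    by (rule Ltilde_eq_sum_superset) (use assms in \<open>auto simp: delta_def split: if_splits\<close>)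
  then show ?thesis by (simp add: delta_def)
qed

lemma selfadjoint_kernel_hermitian:
  assumes "disc_measure m" and "selfadjoint m D L" and "locally_finite m D L l"
  shows "l y x = cnj (l x y)"
proof -
  have "Cc \<subseteq> D" and rows: "\<And>a. finite {b. l a b \<noteq> 0}"
    and L_eq: "\<And>u. u \<in> D \<Longrightarrow> L u = Ltilde l m u"
    using assms(3) by (auto simp: locally_finite_def)
  have delta_in_D: "delta a \<in> D" for a
    using \<open>Cc \<subseteq> D\<close> delta_in_Cc by (rule subsetD)
  have L_delta: "L (delta a) b = l b a * complex_of_real (m a)" for a b
    using L_eq[OF delta_in_D] Ltilde_delta[OF rows] by simp
  have "ip m (delta y) (L (delta x)) = ip m (L (delta y)) (delta x)"
    using assms(2) delta_in_D by (simp add: selfadjoint_def)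
  then have "l y x * (complex_of_real (m x) * complex_of_real (m y))
           = cnj (l x y) * (complex_of_real (m x) * complex_of_real (m y))"
    unfolding ip_delta_left ip_delta_right L_delta by (simp add: ac_simps)
  with disc_measure_nonzero[OF assms(1)] show ?thesis by simp
qed

lemma Ltilde_support_subset:
  assumes herm: "\<And>x y. l y x = cnj (l x y)"
  shows "{z. Ltilde l m u z \<noteq> 0} \<subseteq> (\<Union>y\<in>{y. u y \<noteq> 0}. {z. l y z \<noteq> 0})"
proof
  fix z assume z: "z \<in> {z. Ltilde l m u z \<noteq> 0}"
  have "\<exists>y. l z y \<noteq> 0 \<and> u y \<noteq> 0"
  proof (rule ccontr)
    assume "\<nexists>y. l z y \<noteq> 0 \<and> u y \<noteq> 0"
    then have "Ltilde l m u z = 0"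
      unfolding Ltilde_def by (intro sum.neutral) auto
    with z show False by simp
  qed
  then obtain y where "l z y \<noteq> 0" "u y \<noteq> 0" by blast
  with herm[of z y] show "z \<in> (\<Union>y\<in>{y. u y \<noteq> 0}. {z. l y z \<noteq> 0})"
    by auto
qed

lemma Ltilde_in_Cc:
  assumes "\<And>x y. l y x = cnj (l x y)" and "\<And>x. finite {y. l x y \<noteq> 0}" and "u \<in> Cc"
  shows "Ltilde l m u \<in> Cc"
proof -
  have "{z. Ltilde l m u z \<noteq> 0} \<subseteq> (\<Union>y\<in>{y. u y \<noteq> 0}. {z. l y z \<noteq> 0})"
    by (rule Ltilde_support_subset) (rule assms(1))
  moreover have "finite (\<Union>y\<in>{y. u y \<noteq> 0}. {z. l y z \<noteq> 0})"
    using assms(2,3) by (simp add: Cc_def)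
  ultimately show ?thesis
    unfolding Cc_def by (auto intro: finite_subset)
qed

lemma pair_Cc_eq_iff:
  assumes "\<And>x. m x \<noteq> 0"
  shows "(\<forall>u\<in>Cc. pair m f u = pair m g u) \<longleftrightarrow> f = g"
proof
  assume "\<forall>u\<in>Cc. pair m f u = pair m g u"
  then have "pair m f (delta x) = pair m g (delta x)" for x
    using delta_in_Cc by (rule bspec)
  then have "cnj (f x) * complex_of_real (m x) = cnj (g x) * complex_of_real (m x)" for x
    by (simp only: pair_delta)
  with assms show "f = g"
    by (simp add: fun_eq_iff)
qed simp

lemma pair_Ltilde_symmetric:
  assumes herm: "\<And>x y. l y x = cnj (l x y)" and rows: "\<And>x. finite {y. l x y \<noteq> 0}"
    and "u \<in> Cc"
  shows "pair m \<phi> (Ltilde l m u) = pair m (Ltilde l m \<phi>) u"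
proof -
  define U where "U = {y. u y \<noteq> 0}"
  define S where "S = (\<Union>y\<in>U. {z. l y z \<noteq> 0})"
  have "finite U" using \<open>u \<in> Cc\<close> by (simp add: U_def Cc_def)
  then have "finite S" using rows by (simp add: S_def)
  have herm_cnj: "cnj (l y z) = l z y" for y z
    using herm[of z y] by simp
  have supp_Lu: "{z. Ltilde l m u z \<noteq> 0} \<subseteq> S"
    using Ltilde_support_subset[OF herm] by (simp add: S_def U_def)
  have Lu: "Ltilde l m u z = (\<Sum>y\<in>U. l z y * u y * complex_of_real (m y))" for z
    by (rule Ltilde_eq_sum_superset) (use rows \<open>finite U\<close> in \<open>auto simp: U_def\<close>)
  have L\<phi>: "Ltilde l m \<phi> y = (\<Sum>z\<in>S. l y z * \<phi> z * complex_of_real (m z))" if "y \<in> U" for y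
    by (rule Ltilde_eq_sum_superset) (use rows \<open>finite S\<close> that in \<open>auto simp: S_def\<close>)
  have "pair m \<phi> (Ltilde l m u)
      = (\<Sum>z\<in>S. \<Sum>y\<in>U. cnj (\<phi> z) * (l z y * u y * complex_of_real (m y)) * complex_of_real (m z))"
    by (simp add: pair_eq_sum_superset[OF \<open>finite S\<close> supp_Lu] Lu sum_distrib_left sum_distrib_right)
  also have "\<dots> = (\<Sum>y\<in>U. \<Sum>z\<in>S. cnj (l y z * \<phi> z * complex_of_real (m z)) * u y * complex_of_real (m y))"
    using herm_cnj by (subst sum.swap) (intro sum.cong refl; simp add: ac_simps)
  also have "\<dots> = (\<Sum>y\<in>U. cnj (Ltilde l m \<phi> y) * u y * complex_of_real (m y))"
    by (intro sum.cong refl) (simp add: L\<phi> cnj_sum sum_distrib_right)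
  also have "\<dots> = pair m (Ltilde l m \<phi>) u"
    by (simp add: pair_def U_def)
  finally show ?thesis .
qed

theorem lemma5p1:
  fixes m :: "'v::countable \<Rightarrow> real"
    and D :: "('v \<Rightarrow> complex) set"
    and L :: "('v \<Rightarrow> complex) \<Rightarrow> ('v \<Rightarrow> complex)"
    and l :: "'v \<Rightarrow> 'v \<Rightarrow> complex"
    and \<phi> :: "'v \<Rightarrow> complex"
    and lam :: real
  assumes "disc_measure m"
    and "selfadjoint m D L"
    and "locally_finite m D L l"
  shows "gen_eigenfunction l m \<phi> (complex_of_real lam) \<longleftrightarrow>
         Cc_eigenfunction m D L \<phi> (complex_of_real lam)"
proof -
  have herm: "\<And>x y. l y x = cnj (l x y)"
    using selfadjoint_kernel_hermitian[OF assms] .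
  have rows: "\<And>x. finite {y. l x y \<noteq> 0}" and L_Cc: "\<And>u. u \<in> Cc \<Longrightarrow> u \<in> D \<and> L u = Ltilde l m u"
    using assms(3) by (auto simp: locally_finite_def)
  have "pair m \<phi> (L u) = pair m (Ltilde l m \<phi>) u" and "L u \<in> Cc" and "u \<in> D" if "u \<in> Cc" for u
    using L_Cc[OF that] Ltilde_in_Cc[OF herm rows that] pair_Ltilde_symmetric[OF herm rows that] by auto
  then have "Cc_eigenfunction m D L \<phi> lam \<longleftrightarrow>
      (\<forall>u\<in>Cc. pair m (Ltilde l m \<phi>) u = pair m (\<lambda>x. lam * \<phi> x) u)"
    by (auto simp: Cc_eigenfunction_def pair_scale_left)
  then show ?thesis
    using disc_measure_nonzero[OF assms(1)]
    by (simp add: pair_Cc_eq_iff gen_eigenfunction_def fun_eq_iff)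
qed

end
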